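(* Let $n = 8k+5$ with $k\ge 0$ an integer, and let $m \ge 4n-4$. Let $a,b$ be integers of different parity with $1\le a$, $a+2 < b$, and $b+2 \le m$. Then the permutation $(a,a+2)(b,b+2)\in S_m$ is a product of $n$-crossing permutations over $S_m$.
   Context: For integers $2\le n\le m$ and $1 \le j \le m-n+1$, the $n$-crossing permutation $\pi_j\in S_m$ is $\pi_j=(j,\,j+n-1)(j+1,\,j+n-2)\cdots$, i.e. the involution sending $i \mapsto 2j+n-1-i$ for $j\le i\le j+n-1$ and fixing all other elements of $\{1,\dots,m\}$. The $n$-crossing permutations over $S_m$ are $\pi_1,\dots,\pi_{m-n+1}$. (The permutations $(a,a+2)(b,b+2)$ in the claim are exactly the products of one even-string and one odd-string transposition $(i,i+2)$ that correspond to a pair of triple crossings on disjoint triples of consecutive strings.) *)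

theory Defs
  imports "HOL-Combinatorics.Transposition"
begin

text \<open>Permutations of {1..m} are represented as functions nat => nat fixing everything
outside {1..m}. The n-crossing permutation pi_j sends i to 2j+n-1-i for j <= i <= j+n-1
and fixes all other points.\<close>

definition crossing :: "nat \<Rightarrow> nat \<Rightarrow> nat \<Rightarrow> nat" where
  "crossing n j = (\<lambda>i. if j \<le> i \<and> i \<le> j + n - 1 then 2 * j + n - 1 - i else i)"

definition product_of_crossings :: "nat \<Rightarrow> nat \<Rightarrow> (nat \<Rightarrow> nat) \<Rightarrow> bool" where
  "product_of_crossings n m p \<longleftrightarrow>
     (\<exists>js. set js \<subseteq> {1..m - n + 1} \<and> p = foldr (\<circ>) (map (crossing n) js) id)"

end

theory Submission
  imports Defs
begin

text \<open>
Write \<tau>(x) = transp2 x for the transposition (x, x + 2) and \<pi>(j) for the crossing at j.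
The square of \<pi>(x) \<pi>(x + 1) \<pi>(x + 2) is \<tau>(x) \<tau>(x + n - 1), and conjugating it by \<pi>(j) with
x + 3 \<le> j \<le> x + n - 1 turns the second factor into \<tau>(2j - x - 2). Hence \<tau>(x) \<tau>(y) is a
product of crossings whenever y - x = 2t with 2 \<le> t \<le> n - 2. Since
(\<tau>(x) \<tau>(z)) (\<tau>(z) \<tau>(y)) = \<tau>(x) \<tau>(y), this yields, as soon as m \<ge> 3n - 2, every \<tau>(x) \<tau>(y)
with x \<equiv> y (mod 2), and therefore every product of two transpositions inside one parity class
(each transposition being a palindromic word in the \<tau>'s).

For n = 2h + 1 the crossing \<pi>(j) is the product of the h disjoint transpositions (c - d, c + d),
1 \<le> d \<le> h, with c = j + h; those with d odd lie in one parity class, those with d even in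
the other. For h = 4k + 2 and c \<equiv> b (mod 2), pairing \<tau>(a) with (c - 1, c + 1), \<tau>(b) with
(c - 2, c + 2), and the remaining transpositions in fours as d + 1, d + 3 and d + 2, d + 4 writes
\<tau>(a) \<tau>(b) \<pi>(j), and hence \<tau>(a) \<tau>(b), as a product of crossings.
\<close>

definition transp2 :: "nat \<Rightarrow> nat \<Rightarrow> nat" where
  "transp2 x = transpose x (x + 2)"

lemma transp2_apply: "transp2 x i = (if i = x then x + 2 else if i = x + 2 then x else i)"
  by (simp add: transp2_def transpose_def)

lemma transp2_comp_self [simp]: "transp2 x \<circ> transp2 x = id"
  by (simp add: transp2_def)

lemma transpose_comp_commute:
  assumes "a \<noteq> c" "a \<noteq> d" "b \<noteq> c" "b \<noteq> d"
  shows "transpose a b \<circ> transpose c d = transpose c d \<circ> transpose a b"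
  using assms by (auto simp: fun_eq_iff transpose_def)

lemma involution_conj_transpose:
  assumes "f \<circ> f = id"
  shows "f \<circ> transpose a b \<circ> f = transpose (f a) (f b)"
proof -
  have "f (f x) = x" for x
    using assms by (metis comp_apply id_apply)
  then show ?thesis
    by (auto simp: fun_eq_iff transpose_def)
qed

lemma foldr_comp_eq: "foldr (\<circ>) fs g = foldr (\<circ>) fs id \<circ> g"
  by (induction fs) (auto simp: comp_assoc)

lemma product_of_crossings_id: "product_of_crossings n m id"
  unfolding product_of_crossings_def by (intro exI[of _ "[]"]) simp

lemma product_of_crossings_comp:
  assumes "product_of_crossings n m f" "product_of_crossings n m g"
  shows "product_of_crossings n m (f \<circ> g)"
proof -
  obtain js where "set js \<subseteq> {1..m - n + 1}" "f = foldr (\<circ>) (map (crossing n) js) id"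
    using assms(1) unfolding product_of_crossings_def by blast
  moreover obtain js' where "set js' \<subseteq> {1..m - n + 1}" "g = foldr (\<circ>) (map (crossing n) js') id"
    using assms(2) unfolding product_of_crossings_def by blast
  ultimately show ?thesis
    unfolding product_of_crossings_def
    using foldr_comp_eq[of "map (crossing n) js" g]
    by (intro exI[of _ "js @ js'"]) simp
qed

lemma product_of_crossings_crossing:
  assumes "1 \<le> j" "j + n - 1 \<le> m"
  shows "product_of_crossings n m (crossing n j)"
  unfolding product_of_crossings_def using assms by (intro exI[of _ "[j]"]) auto

lemma crossing_comp_self [simp]: "crossing n j \<circ> crossing n j = id"
  by (auto simp: fun_eq_iff crossing_def)

lemma foldr_crossings_rev_comp:
  "foldr (\<circ>) (map (crossing n) (rev js)) id \<circ> foldr (\<circ>) (map (crossing n) js) id = id"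
proof (induction js)
  case (Cons j js)
  have "foldr (\<circ>) (map (crossing n) (rev (j # js))) id =
      foldr (\<circ>) (map (crossing n) (rev js)) id \<circ> crossing n j"
    using foldr_comp_eq[of "map (crossing n) (rev js)" "crossing n j"] by simp
  then have "foldr (\<circ>) (map (crossing n) (rev (j # js))) id \<circ> foldr (\<circ>) (map (crossing n) (j # js)) id =
      foldr (\<circ>) (map (crossing n) (rev js)) id \<circ> (crossing n j \<circ> crossing n j) \<circ> foldr (\<circ>) (map (crossing n) js) id"
    by (simp only: list.map foldr_Cons o_apply comp_assoc)
  then show ?case
    using Cons.IH by (simp only: crossing_comp_self comp_id)
qed simp

lemma product_of_crossings_inv:
  assumes "product_of_crossings n m p"
  shows "product_of_crossings n m (inv p)"
proof -
  obtain js where js: "set js \<subseteq> {1..m - n + 1}" "p = foldr (\<circ>) (map (crossing n) js) id"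
    using assms unfolding product_of_crossings_def by blast
  have "inv p = foldr (\<circ>) (map (crossing n) (rev js)) id"
  proof (rule inv_unique_comp)
    show "p \<circ> foldr (\<circ>) (map (crossing n) (rev js)) id = id"
      using foldr_crossings_rev_comp[of n "rev js"] by (simp only: js(2) rev_rev_ident)
    show "foldr (\<circ>) (map (crossing n) (rev js)) id \<circ> p = id"
      using foldr_crossings_rev_comp[of n js] by (simp only: js(2))
  qed
  then show ?thesis
    unfolding product_of_crossings_def using js(1) by (intro exI[of _ "rev js"]) auto
qed

lemma crossing_apply_inside: "j \<le> i \<Longrightarrow> i \<le> j + n - 1 \<Longrightarrow> crossing n j i = 2 * j + n - 1 - i"
  by (simp add: crossing_def)

lemma crossing_apply_outside: "i < j \<or> j + n - 1 < i \<Longrightarrow> crossing n j i = i"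
  by (auto simp: crossing_def)

lemma crossing_triple_square:
  fixes n j :: nat
  assumes "5 \<le> n"
  defines "u \<equiv> crossing n j \<circ> crossing n (j + 1) \<circ> crossing n (j + 2)"
  shows "u \<circ> u = transp2 j \<circ> transp2 (j + n - 1)"
proof -
  have u: "u i = (if i = j then j + n - 1 else if i = j + 2 then j + n + 1
      else if j \<le> i \<and> i \<le> j + n + 1 then 2 * j + n + 1 - i else i)" for i
  proof -
    consider "i < j" | "i = j" | "i = j + 1" | "i = j + 2" | "j + 3 \<le> i \<and> i \<le> j + n - 1"
      | "i = j + n" | "i = j + n + 1" | "j + n + 1 < i"
      using assms by linarith
    then show ?thesis
      using assms by cases (auto simp: u_def crossing_def)
  qed
  show ?thesis
  proof
    fix i
    consider "i < j" | "i = j" | "i = j + 1" | "i = j + 2" | "j + 3 \<le> i \<and> i \<le> j + n - 2"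
      | "i = j + n - 1" | "i = j + n" | "i = j + n + 1" | "j + n + 1 < i"
      using assms by linarith
    then show "(u \<circ> u) i = (transp2 j \<circ> transp2 (j + n - 1)) i"
      using assms(1) by cases (auto simp: u transp2_apply)
  qed
qed

lemma crossing_conj_transp2_pair:
  assumes "x + 3 \<le> j" "j \<le> x + n - 1"
  shows "crossing n j \<circ> (transp2 x \<circ> transp2 (x + n - 1)) \<circ> crossing n j
    = transp2 x \<circ> transp2 (2 * j - x - 2)"
proof -
  let ?c = "crossing n j"
  define y where "y = 2 * j - x - 2"
  have "?c \<circ> (transp2 x \<circ> transp2 (x + n - 1)) \<circ> ?c
      = (?c \<circ> transp2 x \<circ> ?c) \<circ> (?c \<circ> transp2 (x + n - 1) \<circ> ?c)"
    by (simp add: comp_assoc flip: comp_assoc[of ?c ?c])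
  also have "\<dots> = transpose (?c x) (?c (x + 2)) \<circ> transpose (?c (x + n - 1)) (?c (x + n - 1 + 2))"
    by (simp only: transp2_def involution_conj_transpose crossing_comp_self)
  also have "?c x = x"
    using assms by (simp add: crossing_apply_outside)
  also have "?c (x + 2) = x + 2"
    using assms by (simp add: crossing_apply_outside)
  also have "?c (x + n - 1) = y + 2"
    using assms unfolding y_def by (subst crossing_apply_inside) linarith+
  also have "?c (x + n - 1 + 2) = y"
    using assms unfolding y_def by (subst crossing_apply_inside) linarith+
  also have "transpose x (x + 2) \<circ> transpose (y + 2) y = transp2 x \<circ> transp2 y"
    by (simp add: transp2_def transpose_commute)
  finally show ?thesis
    unfolding y_def .
qed

definition linked :: "nat \<Rightarrow> nat \<Rightarrow> nat \<Rightarrow> nat \<Rightarrow> bool" where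
  "linked n m x y \<longleftrightarrow> product_of_crossings n m (transp2 x \<circ> transp2 y)"

lemma linked_refl: "linked n m x x"
  by (simp add: linked_def product_of_crossings_id)

lemma linked_sym:
  assumes "linked n m x y"
  shows "linked n m y x"
proof -
  have "inv (transp2 x \<circ> transp2 y) = transp2 y \<circ> transp2 x"
    by (simp add: transp2_def o_inv_distrib)
  then show ?thesis
    using product_of_crossings_inv assms unfolding linked_def by metis
qed

lemma linked_trans:
  assumes "linked n m x y" "linked n m y z"
  shows "linked n m x z"
proof -
  have "(transp2 x \<circ> transp2 y) \<circ> (transp2 y \<circ> transp2 z) = transp2 x \<circ> transp2 z"
    by (simp add: comp_assoc flip: comp_assoc[of "transp2 y"])
  then show ?thesis
    using product_of_crossings_comp assms unfolding linked_def by metis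
qed

lemma linked_shift:
  assumes "5 \<le> n" "1 \<le> x" "x + n + 1 \<le> m"
  shows "linked n m x (x + n - 1)"
proof -
  let ?u = "crossing n x \<circ> crossing n (x + 1) \<circ> crossing n (x + 2)"
  have u: "product_of_crossings n m ?u"
    by (intro product_of_crossings_comp product_of_crossings_crossing) (use assms in simp_all)
  from u u have "product_of_crossings n m (?u \<circ> ?u)"
    by (rule product_of_crossings_comp)
  then show ?thesis
    unfolding linked_def crossing_triple_square[OF assms(1)] .
qed

lemma linked_even_gap:
  assumes "5 \<le> n" "2 \<le> t" "t \<le> n - 2" "1 \<le> x" "x + t + n \<le> m"
  shows "linked n m x (x + 2 * t)"
proof -
  let ?c = "crossing n (x + t + 1)"
  have "product_of_crossings n m ?c"
    using assms by (intro product_of_crossings_crossing) auto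
  moreover have "linked n m x (x + n - 1)"
    using assms by (intro linked_shift) auto
  ultimately have "product_of_crossings n m (?c \<circ> (transp2 x \<circ> transp2 (x + n - 1)) \<circ> ?c)"
    unfolding linked_def by (metis product_of_crossings_comp)
  also have "?c \<circ> (transp2 x \<circ> transp2 (x + n - 1)) \<circ> ?c = transp2 x \<circ> transp2 (x + 2 * t)"
    using assms crossing_conj_transp2_pair[of x "x + t + 1" n] by simp
  finally show ?thesis
    unfolding linked_def .
qed

definition transp2_prod :: "nat list \<Rightarrow> nat \<Rightarrow> nat" where
  "transp2_prod xs = foldr (\<lambda>x f. transp2 x \<circ> f) xs id"

lemma transp2_prod_simps [simp]:
  "transp2_prod [] = id"
  "transp2_prod (x # xs) = transp2 x \<circ> transp2_prod xs"
  by (simp_all add: transp2_prod_def)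

lemma transp2_prod_append: "transp2_prod (xs @ ys) = transp2_prod xs \<circ> transp2_prod ys"
  by (induction xs) (simp_all add: comp_assoc)

fun transp2_word :: "nat \<Rightarrow> nat \<Rightarrow> nat list" where
  "transp2_word u 0 = [u]"
| "transp2_word u (Suc e) = u # transp2_word (u + 2) e @ [u]"

lemma length_transp2_word: "length (transp2_word u e) = 2 * e + 1"
  by (induction e arbitrary: u) auto

lemma set_transp2_word: "z \<in> set (transp2_word u e) \<Longrightarrow> u \<le> z \<and> z \<le> u + 2 * e \<and> even (z + u)"
proof (induction e arbitrary: u)
  case (Suc e)
  then consider "z = u" | "z \<in> set (transp2_word (u + 2) e)"
    by auto
  then show ?case
    using Suc.IH[of "u + 2"] by cases auto
qed simp

lemma transp2_prod_transp2_word: "transp2_prod (transp2_word u e) = transpose u (u + 2 * e + 2)"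
proof (induction e arbitrary: u)
  case 0
  show ?case
    by (simp add: transp2_def)
next
  case (Suc e)
  have "transp2_prod (transp2_word u (Suc e)) = transp2 u \<circ> transpose (u + 2) (u + 2 * Suc e + 2) \<circ> transp2 u"
    using Suc.IH[of "u + 2"] by (simp add: transp2_prod_append comp_assoc)
  also have "\<dots> = transpose u (u + 2 * Suc e + 2)"
    unfolding transp2_def by (rule transpose_comp_triple) auto
  finally show ?case .
qed

definition reflection :: "nat \<Rightarrow> nat \<Rightarrow> nat \<Rightarrow> nat" where
  "reflection c h = (\<lambda>i. if c - h \<le> i \<and> i \<le> c + h then 2 * c - i else i)"

lemma crossing_eq_reflection: "crossing (2 * h + 1) j = reflection (j + h) h"
  by (auto simp: fun_eq_iff crossing_def reflection_def)

lemma reflection_0: "reflection c 0 = id"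
  by (auto simp: fun_eq_iff reflection_def)

lemma reflection_Suc:
  assumes "Suc h \<le> c"
  shows "reflection c (Suc h) = reflection c h \<circ> transpose (c - Suc h) (c + Suc h)"
  using assms by (auto simp: fun_eq_iff reflection_def transpose_def)

lemma reflection_add4:
  assumes "h + 4 \<le> c"
  shows "reflection c (h + 4) = reflection c h
    \<circ> (transpose (c - (h + 1)) (c + (h + 1)) \<circ> transpose (c - (h + 3)) (c + (h + 3)))
    \<circ> (transpose (c - (h + 2)) (c + (h + 2)) \<circ> transpose (c - (h + 4)) (c + (h + 4)))"
proof -
  have "reflection c (h + 4) = reflection c h
    \<circ> transpose (c - (h + 1)) (c + (h + 1))
    \<circ> (transpose (c - (h + 2)) (c + (h + 2)) \<circ> transpose (c - (h + 3)) (c + (h + 3)))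
    \<circ> transpose (c - (h + 4)) (c + (h + 4))"
    using assms by (simp add: reflection_Suc numeral_eq_Suc comp_assoc)
  also have "transpose (c - (h + 2)) (c + (h + 2)) \<circ> transpose (c - (h + 3)) (c + (h + 3))
    = transpose (c - (h + 3)) (c + (h + 3)) \<circ> transpose (c - (h + 2)) (c + (h + 2))"
    using assms by (intro transpose_comp_commute) linarith+
  finally show ?thesis
    by (simp only: comp_assoc)
qed

context
  fixes n m :: nat
  assumes n_ge_5: "5 \<le> n" and m_ge: "3 * n \<le> m + 2"
begin

lemma linked_adjacent:
  assumes "1 \<le> u" "u + 4 \<le> m"
  shows "linked n m u (u + 2)"
proof (cases "u + n + 4 \<le> m")
  case True
  have "linked n m u (u + 2 * 3)"
    using n_ge_5 assms True by (intro linked_even_gap) auto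
  moreover have "linked n m (u + 2 * 3) (u + 2)"
  proof -
    have "linked n m (u + 2) (u + 2 + 2 * 2)"
      using n_ge_5 assms True by (intro linked_even_gap) auto
    then have "linked n m (u + 2) (u + 2 * 3)"
      by (simp add: ac_simps)
    then show ?thesis
      by (rule linked_sym)
  qed
  ultimately show ?thesis
    by (rule linked_trans)
next
  case False
  \<comment> \<open>No room to the right of u + 2: link both u and u + 2 to a point v far to the left,
    which exists because m \<ge> 3n - 2.\<close>
  define v where "v = u + 6 - 2 * n"
  have v: "1 \<le> v" "v + 2 * (n - 3) = u" "v + 2 * (n - 2) = u + 2"
    using False m_ge n_ge_5 unfolding v_def by linarith+
  have "linked n m v u"
    using linked_even_gap[of n "n - 3" v m] v assms n_ge_5 by simp
  moreover have "linked n m v (u + 2)"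
    using linked_even_gap[of n "n - 2" v m] v assms n_ge_5 by simp
  ultimately show ?thesis
    by (blast intro: linked_trans linked_sym)
qed

lemma linked_progression:
  assumes "1 \<le> x" "x + 2 * d + 2 \<le> m"
  shows "linked n m x (x + 2 * d)"
  using assms
proof (induction d)
  case 0
  show ?case
    by (simp add: linked_refl)
next
  case (Suc d)
  then have "linked n m x (x + 2 * d)"
    by simp
  moreover have "linked n m (x + 2 * d) (x + 2 * d + 2)"
    using Suc.prems by (intro linked_adjacent) auto
  ultimately have "linked n m x (x + 2 * d + 2)"
    by (rule linked_trans)
  then show ?case
    by simp
qed

lemma linked_same_parity:
  assumes "1 \<le> x" "1 \<le> y" "x + 2 \<le> m" "y + 2 \<le> m" "even (x + y)"
  shows "linked n m x y"
proof -
  have ordered: "linked n m x y" if "1 \<le> x" "x \<le> y" "y + 2 \<le> m" "even (x + y)" for x y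
  proof -
    have "y = x + 2 * ((y - x) div 2)"
      using that by presburger
    then show ?thesis
      using linked_progression[of x "(y - x) div 2"] that by simp
  qed
  show ?thesis
  proof (cases "x \<le> y")
    case True
    then show ?thesis
      using ordered assms by simp
  next
    case False
    then have "linked n m y x"
      using ordered[of y x] assms by (simp add: add.commute)
    then show ?thesis
      by (rule linked_sym)
  qed
qed

lemma product_of_crossings_transp2_prod:
  assumes "\<forall>x\<in>set xs. 1 \<le> x \<and> x + 2 \<le> m \<and> even (x + p)" "even (length xs)"
  shows "product_of_crossings n m (transp2_prod xs)"
  using assms
proof (induction xs rule: induct_list012)
  case 1
  show ?case
    by (simp only: transp2_prod_simps product_of_crossings_id)
next
  case (2 x)
  then show ?case
    by simp
next
  case (3 x y zs)
  have x: "1 \<le> x \<and> x + 2 \<le> m \<and> even (x + p)" and y: "1 \<le> y \<and> y + 2 \<le> m \<and> even (y + p)"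
    using 3 by auto
  then have "even (x + y)"
    by presburger
  then have "linked n m x y"
    using x y by (intro linked_same_parity) auto
  moreover have "product_of_crossings n m (transp2_prod zs)"
    using 3 by simp
  ultimately have "product_of_crossings n m ((transp2 x \<circ> transp2 y) \<circ> transp2_prod zs)"
    unfolding linked_def by (rule product_of_crossings_comp)
  then show ?case
    by (simp only: transp2_prod_simps comp_assoc)
qed

lemma product_of_crossings_transpose_pair:
  assumes "1 \<le> u" "u < v" "v \<le> m" "1 \<le> x" "x < y" "y \<le> m"
    and "even (u + v)" "even (x + y)" "even (u + x)"
  shows "product_of_crossings n m (transpose u v \<circ> transpose x y)"
proof -
  define e where "e = (v - u - 2) div 2"
  define e' where "e' = (y - x - 2) div 2"
  have v: "v = u + 2 * e + 2" and y: "y = x + 2 * e' + 2"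
    using assms unfolding e_def e'_def by presburger+
  let ?xs = "transp2_word u e @ transp2_word x e'"
  have "product_of_crossings n m (transp2_prod ?xs)"
  proof (rule product_of_crossings_transp2_prod[where p = u])
    show "\<forall>z\<in>set ?xs. 1 \<le> z \<and> z + 2 \<le> m \<and> even (z + u)"
      using assms v y by (auto dest!: set_transp2_word)
    show "even (length ?xs)"
      by (simp add: length_transp2_word)
  qed
  then show ?thesis
    by (simp add: transp2_prod_append transp2_prod_transp2_word v y)
qed

lemma product_of_crossings_symmetric_transpose_pair:
  assumes "1 \<le> d" "d < d'" "d' < c" "c + d' \<le> m" "even (d + d')"
  shows "product_of_crossings n m (transpose (c - d) (c + d) \<circ> transpose (c - d') (c + d'))"
proof (rule product_of_crossings_transpose_pair)
  show "1 \<le> c - d" "c - d < c + d" "c + d \<le> m" "1 \<le> c - d'" "c - d' < c + d'" "c + d' \<le> m"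
    using assms by linarith+
  define q where "q = (d' - d) div 2"
  have "d' = d + 2 * q"
    using assms unfolding q_def by presburger
  then have "c - d + (c + d) = 2 * c" "c - d' + (c + d') = 2 * c" "c - d + (c - d') = 2 * (c - d' + q)"
    using assms by arith+
  then show "even (c - d + (c + d))" "even (c - d' + (c + d'))" "even (c - d + (c - d'))"
    by simp_all
qed

lemma product_of_crossings_transp2_reflection:
  assumes "1 \<le> a" "a + 2 \<le> m" "1 \<le> b" "b + 2 \<le> m" "odd (a + b)" "even (b + c)"
    and "4 * i + 2 < c" "c + 4 * i + 2 \<le> m"
  shows "product_of_crossings n m (transp2 a \<circ> transp2 b \<circ> reflection c (4 * i + 2))"
  using assms(7,8)
proof (induction i)
  case 0
  let ?T1 = "transpose (c - 1) (c + 1)" and ?T2 = "transpose (c - 2) (c + 2)"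
  have "reflection c (4 * 0 + 2) = ?T1 \<circ> ?T2"
    using 0 by (simp add: numeral_2_eq_2 reflection_Suc reflection_0)
  then have "transp2 a \<circ> transp2 b \<circ> reflection c (4 * 0 + 2) = transp2 a \<circ> (transp2 b \<circ> ?T1) \<circ> ?T2"
    by (simp only: comp_assoc)
  also have "transp2 b \<circ> ?T1 = ?T1 \<circ> transp2 b"
    unfolding transp2_def using assms(6) 0 by (intro transpose_comp_commute) presburger+
  finally have regroup: "transp2 a \<circ> transp2 b \<circ> reflection c (4 * 0 + 2) = (transp2 a \<circ> ?T1) \<circ> (transp2 b \<circ> ?T2)"
    by (simp only: comp_assoc)
  have "product_of_crossings n m (transp2 a \<circ> ?T1)"
    unfolding transp2_def using assms 0 by (intro product_of_crossings_transpose_pair) presburger+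
  moreover have "product_of_crossings n m (transp2 b \<circ> ?T2)"
    unfolding transp2_def using assms 0 by (intro product_of_crossings_transpose_pair) presburger+
  ultimately show ?case
    unfolding regroup by (rule product_of_crossings_comp)
next
  case (Suc i)
  let ?h = "4 * i + 2" and ?T = "\<lambda>d. transpose (c - d) (c + d)"
  have pair: "product_of_crossings n m (?T d \<circ> ?T d')"
    if "1 \<le> d" "d < d'" "d' \<le> ?h + 4" "even (d + d')" for d d'
    using that Suc.prems by (intro product_of_crossings_symmetric_transpose_pair) auto
  have "product_of_crossings n m (transp2 a \<circ> transp2 b \<circ> reflection c ?h)"
    using Suc.prems by (intro Suc.IH) simp_all
  moreover have "product_of_crossings n m ((?T (?h + 1) \<circ> ?T (?h + 3)) \<circ> (?T (?h + 2) \<circ> ?T (?h + 4)))"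
    by (intro product_of_crossings_comp pair) auto
  ultimately have "product_of_crossings n m (transp2 a \<circ> transp2 b \<circ> reflection c ?h
      \<circ> ((?T (?h + 1) \<circ> ?T (?h + 3)) \<circ> (?T (?h + 2) \<circ> ?T (?h + 4))))"
    by (rule product_of_crossings_comp)
  moreover have "4 * Suc i + 2 = ?h + 4" "?h + 4 \<le> c"
    using Suc.prems by simp_all
  ultimately show ?case
    using reflection_add4 by (simp only: comp_assoc)
qed

end

theorem lemma4p6:
  fixes k n m a b :: nat
  assumes "n = 8 * k + 5"
    and "m \<ge> 4 * n - 4"
    and "odd (a + b)"
    and "1 \<le> a" and "a + 2 < b" and "b + 2 \<le> m"
  shows "product_of_crossings n m (transpose a (a + 2) \<circ> transpose b (b + 2))"
proof -
  define j where "j = (if even b then 2 else 1 :: nat)"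
  define c where "c = j + (4 * k + 2)"
  have "5 \<le> n" "3 * n \<le> m + 2"
    using assms by linarith+
  have "n = 2 * (4 * k + 2) + 1"
    using assms(1) by simp
  then have "crossing n j = reflection c (4 * k + 2)"
    unfolding c_def by (simp only: crossing_eq_reflection)
  moreover have "product_of_crossings n m (transp2 a \<circ> transp2 b \<circ> reflection c (4 * k + 2))"
    using assms unfolding c_def j_def
    by (intro product_of_crossings_transp2_reflection[OF \<open>5 \<le> n\<close> \<open>3 * n \<le> m + 2\<close>]) auto
  ultimately have "product_of_crossings n m (transp2 a \<circ> transp2 b \<circ> crossing n j)"
    by (simp only:)
  moreover have "product_of_crossings n m (crossing n j)"
    using assms unfolding j_def by (intro product_of_crossings_crossing) auto
  ultimately have "product_of_crossings n m (transp2 a \<circ> transp2 b \<circ> crossing n j \<circ> crossing n j)"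
    by (rule product_of_crossings_comp)
  then show ?thesis
    by (simp only: comp_assoc crossing_comp_self comp_id transp2_def)
qed

end
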